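(* For every positive integer $n$, let $L_n(q)=\operatorname{lcm}\left({n\brack 0}_q,{n\brack 1}_q,\ldots,{n\brack n}_q\right)\in\mathbb{Z}[q]$. Then $$L_n(1)=\lim_{q\to1}L_n(q)=\operatorname{lcm}\left(\binom{n}{0},\binom{n}{1},\ldots,\binom{n}{n}\right).$$ *)

theory Defs
  imports Complex_Main "HOL-Computational_Algebra.Polynomial_Factorial"
begin

fun qbinom :: "nat \<Rightarrow> nat \<Rightarrow> int poly" where
  "qbinom 0 0 = 1"
| "qbinom 0 (Suc k) = 0"
| "qbinom (Suc n) 0 = 1"
| "qbinom (Suc n) (Suc k) = qbinom n k + monom 1 (Suc k) * qbinom n (Suc k)"

text \<open>L_n(q) = lcm of the q-binomials [n,0]_q, ..., [n,n]_q in Z[q]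
  (normalized lcm, i.e. positive leading coefficient).\<close>
definition Lq :: "nat \<Rightarrow> int poly" where
  "Lq n = Lcm (qbinom n ` {0..n})"

end

theory Submission
  imports Defs "HOL-Computational_Algebra.Primes"
begin

(* Over \<int>[q] the cyclotomic polynomials \<Phi>_d are pairwise coprime and satisfy
   q^m - 1 = \<Prod>_{d | m} \<Phi>_d.  Writing the q-binomial as a quotient of products of the
   polynomials q^i - 1 and counting how often each \<Phi>_d occurs gives
     [n,k]_q = \<Prod>{\<Phi>_d | 1 \<le> d \<le> n, n mod d < k mod d}          (each \<Phi>_d at most once),
   the index set being carry_divs n k; by pairwise coprimality L_n(q) = \<Prod>_{d \<in> S_n} \<Phi>_d,
   where S_n = lcm_divs n is the union of these index sets over k.  Evaluating at q = 1, binom n k is the corresponding product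
   of the positive integers \<Phi>_d(1); moreover \<Phi>_d(1) divides each prime factor of d,
   so only prime powers d = p^a contribute p-adic valuation.  All prime powers of p
   in S_n lie in the index set of the single k = p^b - 1, p^b the largest of them, so
   the p-adic valuation of \<Prod>_{d \<in> S_n} \<Phi>_d(1) is attained by one binomial coefficient
   and this product equals lcm(binom n 0, ..., binom n n). *)

definition Xm1 :: "nat \<Rightarrow> 'a::comm_ring_1 poly" where
  "Xm1 m = monom 1 m - 1"

lemma Xm1_mult: "(Xm1 (a * k) :: 'a::comm_ring_1 poly) = Xm1 a * (\<Sum>i<k. monom 1 (a * i))"
proof (induction k)
  case 0
  then show ?case by (simp add: Xm1_def)
next
  case (Suc k)
  have "(Xm1 (a * Suc k) :: 'a poly) = Xm1 (a * k) + monom 1 (a * k) * Xm1 a"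
    by (simp add: Xm1_def algebra_simps mult_monom)
  also have "\<dots> = Xm1 a * (\<Sum>i<k. monom 1 (a * i)) + Xm1 a * monom 1 (a * k)"
    by (simp only: Suc.IH mult.commute[of "monom 1 (a * k)" "Xm1 a"])
  also have "\<dots> = Xm1 a * (\<Sum>i<Suc k. monom 1 (a * i))"
    by (simp add: distrib_left)
  finally show ?case .
qed

lemma Xm1_dvd: "a dvd b \<Longrightarrow> Xm1 a dvd Xm1 b"
  using Xm1_mult by (auto simp: dvd_def)

lemma Xm1_add: "Xm1 (a + b) = monom 1 b * Xm1 a + Xm1 b"
  by (simp add: Xm1_def algebra_simps mult_monom)

lemma lead_coeff_Xm1: "m \<ge> 1 \<Longrightarrow> lead_coeff (Xm1 m) = 1"
proof -
  assume m: "m \<ge> 1"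
  have "degree (Xm1 m :: 'a poly) \<le> m"
    unfolding Xm1_def by (rule degree_diff_le) (auto simp: degree_monom_eq)
  moreover have "m \<le> degree (Xm1 m :: 'a poly)"
    using m by (intro le_degree) (simp add: Xm1_def)
  ultimately show ?thesis using m by (simp add: Xm1_def)
qed

lemma Xm1_nonzero: "m \<ge> 1 \<Longrightarrow> Xm1 m \<noteq> 0"
  by (metis lead_coeff_Xm1 leading_coeff_0_iff zero_neq_one)

lemma dvd_Xm1_gcd:
  assumes "a \<noteq> 0" and "h dvd Xm1 a" and "h dvd Xm1 b"
  shows "h dvd Xm1 (gcd a b)"
proof -
  obtain u v where uv: "a * u = b * v + gcd a b"
    using bezout_nat[OF \<open>a \<noteq> 0\<close>] by blast
  have "h dvd Xm1 (a * u)" using dvd_trans[OF assms(2) Xm1_dvd[of a "a * u"]] by simp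
  then have "h dvd monom 1 (gcd a b) * Xm1 (b * v) + Xm1 (gcd a b)"
    by (simp add: uv Xm1_add)
  moreover have "h dvd Xm1 (b * v)" using dvd_trans[OF assms(3) Xm1_dvd[of b "b * v"]] by simp
  then have "h dvd monom 1 (gcd a b) * Xm1 (b * v)" by (rule dvd_mult)
  ultimately show ?thesis by (simp add: dvd_add_right_iff)
qed

text \<open>q^m - 1 is squarefree in \<int>[q]: a square factor g^2 divides its derivative m q^(m-1)
  as well, hence divides the constant m; so g is an integer constant dividing the
  leading coefficient 1.\<close>
lemma Xm1_squarefree:
  assumes m: "m \<ge> 1" and sq: "g * g dvd (Xm1 m :: int poly)"
  shows "is_unit g"
proof -
  obtain h where h: "Xm1 m = g * g * h" using sq by (auto simp: dvd_def)
  have "pderiv (Xm1 m) = g * (2 * pderiv g * h + g * pderiv h)"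
    unfolding h by (simp add: pderiv_mult algebra_simps)
  moreover have "pderiv (Xm1 m :: int poly) = monom (of_nat m) (m - 1)"
    by (simp add: Xm1_def pderiv_diff pderiv_monom)
  ultimately have g_deriv: "g dvd monom (of_nat m) (m - 1)" by (metis dvd_triv_left)
  have g_Xm1: "g dvd Xm1 m" using sq by (metis dvd_mult_left)
  have "monom 1 1 * monom (of_nat m) (m - 1) - smult (of_nat m) (Xm1 m) = [:int m:]"
    using m by (simp add: Xm1_def mult_monom algebra_simps smult_diff_right monom_0 smult_monom)
  moreover have "g dvd monom 1 1 * monom (of_nat m) (m - 1) - smult (of_nat m) (Xm1 m)"
    using g_deriv g_Xm1 by (simp add: smult_dvd_cancel dvd_smult)
  ultimately have g_const: "g dvd [:int m:]" by simp
  have "degree g = 0" using dvd_imp_degree_le[OF g_const] m by simp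
  then obtain c where c: "g = [:c:]" by (metis degree_eq_zeroE)
  have "c dvd coeff (Xm1 m) m" using g_Xm1 c const_poly_dvd_iff by blast
  then have "c dvd 1" using m by (simp add: Xm1_def)
  then show ?thesis using c is_unit_const_poly_iff by metis
qed

lemma prod_pairwise_coprime_dvd:
  fixes f :: "'b \<Rightarrow> 'a::semiring_gcd"
  assumes "finite A" and "\<And>i. i \<in> A \<Longrightarrow> f i dvd c"
    and "\<And>i j. i \<in> A \<Longrightarrow> j \<in> A \<Longrightarrow> i \<noteq> j \<Longrightarrow> coprime (f i) (f j)"
  shows "prod f A dvd c"
  using assms
proof (induction A rule: finite_induct)
  case empty
  then show ?case by simp
next
  case (insert x F)
  have "coprime (f x) (prod f F)"
    by (rule prod_coprime_right) (use insert in auto)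
  with insert show ?case by (simp add: divides_mult)
qed

section \<open>Cyclotomic polynomials\<close>

text \<open>\<Phi>_n = (q^n - 1) / \<Prod>_{d | n, d < n} \<Phi>_d; the factorization below shows that the
  division is exact.\<close>
function cyclo :: "nat \<Rightarrow> int poly" where
  "cyclo n = (if n = 0 then 1 else Xm1 n div (\<Prod>d\<in>{d. d dvd n \<and> d < n}. cyclo d))"
  by auto
termination by (relation "measure id") auto

declare cyclo.simps [simp del]

lemma cyclo_mult_Xm1_dvd:
  assumes fact_e: "Xm1 e = (\<Prod>c\<in>{c. c dvd e}. cyclo c)"
    and fact_g: "Xm1 g = (\<Prod>c\<in>{c. c dvd g}. cyclo c)"
    and "g dvd e" and "g < e"
  shows "cyclo e * Xm1 g dvd Xm1 e"
proof -
  have fin: "finite {c. c dvd e}" using \<open>g < e\<close> by simp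
  have "g > 0" using \<open>g dvd e\<close> \<open>g < e\<close> by (cases g) auto
  have "{c. c dvd g} \<subseteq> {c. c dvd e} - {e}"
  proof
    fix c assume "c \<in> {c. c dvd g}"
    then have "c dvd g" by simp
    have "c \<le> g" using dvd_imp_le[OF \<open>c dvd g\<close> \<open>g > 0\<close>] .
    then show "c \<in> {c. c dvd e} - {e}"
      using dvd_trans[OF \<open>c dvd g\<close> \<open>g dvd e\<close>] \<open>g < e\<close> by auto
  qed
  then have "Xm1 g dvd (\<Prod>c\<in>{c. c dvd e} - {e}. cyclo c)"
    unfolding fact_g using fin by (intro prod_dvd_prod_subset) auto
  then have "cyclo e * Xm1 g dvd cyclo e * (\<Prod>c\<in>{c. c dvd e} - {e}. cyclo c)" by simp
  also have "\<dots> = Xm1 e" unfolding fact_e using prod.remove[OF fin, of e cyclo] by simp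
  finally show ?thesis .
qed

text \<open>Key coprimality step: if the factorization holds up to e and e does not divide d,
  then \<Phi>_e is coprime to q^d - 1.  A common factor h divides q^g - 1 for the proper
  divisor g = gcd e d of e, so h^2 divides \<Phi>_e (q^g - 1), which divides the squarefree
  q^e - 1.\<close>
lemma cyclo_coprime_Xm1:
  assumes fact: "\<And>m. 1 \<le> m \<Longrightarrow> m \<le> e \<Longrightarrow> Xm1 m = (\<Prod>c\<in>{c. c dvd m}. cyclo c)"
    and e: "e \<ge> 1" and "\<not> e dvd d"
  shows "coprime (cyclo e) (Xm1 d)"
proof (rule coprimeI)
  fix h assume h_cyclo: "h dvd cyclo e" and h_Xm1: "h dvd Xm1 d"
  define g where "g = gcd e d"
  have "g dvd e" "g \<noteq> e" "g \<ge> 1"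
    using e \<open>\<not> e dvd d\<close> by (auto simp: g_def Suc_le_eq) (metis gcd_dvd2)
  then have g: "g dvd e" "g < e" "g \<ge> 1"
    using e dvd_imp_le[of g e] by auto
  have "cyclo e dvd Xm1 e"
    unfolding fact[OF e order_refl] using e by (intro dvd_prodI) auto
  then have "h dvd Xm1 g"
    unfolding g_def using e h_Xm1 dvd_trans[OF h_cyclo] by (intro dvd_Xm1_gcd) auto
  then have "h * h dvd cyclo e * Xm1 g" using h_cyclo by (simp add: mult_dvd_mono)
  also have "\<dots> dvd Xm1 e" using g fact by (intro cyclo_mult_Xm1_dvd) auto
  finally show "is_unit h" using Xm1_squarefree e by blast
qed

text \<open>Pairwise coprimality of \<Phi>_1, ..., \<Phi>_N, given the factorization up to N: of two
  distinct indices one does not divide the other, and \<Phi> at that index is coprime to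
  q^m - 1 for the other index m, hence to its factor \<Phi>_m.\<close>
lemma cyclo_coprime_below:
  assumes fact: "\<And>m. 1 \<le> m \<Longrightarrow> m \<le> N \<Longrightarrow> Xm1 m = (\<Prod>c\<in>{c. c dvd m}. cyclo c)"
    and "d \<le> N" "e \<le> N" "d \<ge> 1" "e \<ge> 1" "d \<noteq> e"
  shows "coprime (cyclo d) (cyclo e)"
proof -
  have cyclo_dvd: "cyclo k dvd Xm1 k" if "1 \<le> k" "k \<le> N" for k
    unfolding fact[OF that] using that by (intro dvd_prodI) auto
  have coprime_dvd: "coprime (cyclo d') (cyclo e')"
    if "\<not> d' dvd e'" "d' \<in> {d, e}" "e' \<in> {d, e}" for d' e'
  proof -
    have "coprime (cyclo d') (Xm1 e')"
      using that assms by (intro cyclo_coprime_Xm1[where e = d']) auto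
    moreover have "cyclo e' dvd Xm1 e'" using that assms by (intro cyclo_dvd) auto
    ultimately show ?thesis using coprime_divisors[OF dvd_refl] by blast
  qed
  show ?thesis
  proof (cases "e dvd d")
    case True
    then have "\<not> d dvd e" using \<open>d \<noteq> e\<close> dvd_antisym by blast
    then show ?thesis using coprime_dvd[of d e] by simp
  next
    case False
    then show ?thesis using coprime_dvd[of e d] by (simp add: coprime_commute)
  qed
qed

text \<open>The cyclotomic factorization q^m - 1 = \<Prod>_{d | m} \<Phi>_d, by strong induction: the
  pairwise coprime \<Phi>_d for proper divisors d all divide q^m - 1, hence so does their
  product, and \<Phi>_m is by definition the exact quotient.\<close>
theorem Xm1_cyclo_prod: "m \<ge> 1 \<Longrightarrow> Xm1 m = (\<Prod>d\<in>{d. d dvd m}. cyclo d)"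
proof (induction m rule: less_induct)
  case (less m)
  define Q where "Q = (\<Prod>d\<in>{d. d dvd m \<and> d < m}. cyclo d)"
  have proper_pos: "i \<ge> 1" if "i \<in> {d. d dvd m \<and> d < m}" for i
    using that less.prems by (auto intro: Suc_leI dvd_pos_nat)
  have "Q dvd Xm1 m"
    unfolding Q_def
  proof (rule prod_pairwise_coprime_dvd)
    fix i assume i: "i \<in> {d. d dvd m \<and> d < m}"
    then have "i < m" by simp
    have "cyclo i dvd Xm1 i"
      unfolding less.IH[OF \<open>i < m\<close> proper_pos[OF i]] using proper_pos[OF i]
      by (intro dvd_prodI) auto
    then show "cyclo i dvd Xm1 m" using i Xm1_dvd dvd_trans by blast
  next
    fix i j assume "i \<in> {d. d dvd m \<and> d < m}" "j \<in> {d. d dvd m \<and> d < m}" "i \<noteq> j"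
    then show "coprime (cyclo i) (cyclo j)"
      using proper_pos less.IH by (intro cyclo_coprime_below[where N = "m - 1"]) auto
  qed simp
  have "{d. d dvd m} - {m} = {d. d dvd m \<and> d < m}"
    using less.prems by (auto dest: dvd_imp_le)
  then have prod_eq: "(\<Prod>d\<in>{d. d dvd m}. cyclo d) = cyclo m * Q"
    using prod.remove[of "{d. d dvd m}" m cyclo] less.prems by (simp add: Q_def)
  have "cyclo m = Xm1 m div Q" using less.prems by (subst cyclo.simps) (simp add: Q_def)
  then have "Xm1 m = cyclo m * Q" using \<open>Q dvd Xm1 m\<close> by simp
  then show ?case using prod_eq by simp
qed

corollary cyclo_coprime: "d \<ge> 1 \<Longrightarrow> e \<ge> 1 \<Longrightarrow> d \<noteq> e \<Longrightarrow> coprime (cyclo d) (cyclo e)"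
  by (rule cyclo_coprime_below[where N = "max d e"]) (auto intro: Xm1_cyclo_prod)

text \<open>\<Phi>_m is monic, being the quotient of the monic q^m - 1 by a product of monic factors.\<close>
lemma cyclo_monic: "m \<ge> 1 \<Longrightarrow> lead_coeff (cyclo m) = 1"
proof (induction m rule: less_induct)
  case (less m)
  have "{d. d dvd m} - {m} = {d. d dvd m \<and> d < m}"
    using less.prems by (auto dest: dvd_imp_le)
  then have "Xm1 m = cyclo m * (\<Prod>d\<in>{d. d dvd m \<and> d < m}. cyclo d)"
    using Xm1_cyclo_prod[OF less.prems] prod.remove[of "{d. d dvd m}" m cyclo] less.prems
    by simp
  moreover have "lead_coeff (\<Prod>d\<in>{d. d dvd m \<and> d < m}. cyclo d) = 1"
    unfolding lead_coeff_prod
    by (rule prod.neutral) (use less in \<open>auto intro: Suc_leI dvd_pos_nat\<close>)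
  ultimately show ?case using lead_coeff_Xm1[OF less.prems]
    by (metis lead_coeff_mult mult.right_neutral)
qed

lemma cyclo_nonzero: "m \<ge> 1 \<Longrightarrow> cyclo m \<noteq> 0"
  using cyclo_monic by fastforce

section \<open>Values of cyclotomic polynomials at 1\<close>

text \<open>Dividing q^m - 1 by \<Phi>_1 = q - 1: \<Prod>_{d | m, d > 1} \<Phi>_d(1) = 1 + 1 + ... + 1 = m.\<close>
lemma prod_cyclo_at_one: "m \<ge> 1 \<Longrightarrow> poly (\<Prod>d\<in>{d. d dvd m \<and> d > 1}. cyclo d) 1 = int m"
proof -
  assume m: "m \<ge> 1"
  have "{d::nat. d dvd 1} = {1}" by auto
  then have cyclo_1: "cyclo 1 = Xm1 1" using Xm1_cyclo_prod[of 1] by simp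
  have "{d. d dvd m \<and> d > 1} = {d. d dvd m} - {1}" using m by auto
  then have "Xm1 1 * (\<Prod>d\<in>{d. d dvd m \<and> d > 1}. cyclo d) = Xm1 m"
    using Xm1_cyclo_prod[OF m] prod.remove[of "{d. d dvd m}" 1 cyclo] m cyclo_1 by simp
  also have "\<dots> = Xm1 1 * (\<Sum>i<m. monom 1 i)" using Xm1_mult[of 1 m] by simp
  finally have "(\<Prod>d\<in>{d. d dvd m \<and> d > 1}. cyclo d) = (\<Sum>i<m. monom 1 i)"
    using Xm1_nonzero[of 1, where 'a = int] by simp
  then show ?thesis by (simp add: poly_sum poly_monom)
qed

lemma cyclo_at_one_pos: "m \<ge> 2 \<Longrightarrow> poly (cyclo m) 1 > 0"
proof (induction m rule: less_induct)
  case (less m)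
  have split: "{d. d dvd m \<and> d > 1} = insert m {d. d dvd m \<and> 1 < d \<and> d < m}"
    using less.prems by (auto dest: dvd_imp_le)
  have "int m = poly (cyclo m) 1 * (\<Prod>d\<in>{d. d dvd m \<and> 1 < d \<and> d < m}. poly (cyclo d) 1)"
    using prod_cyclo_at_one[of m] less.prems unfolding split by (simp add: poly_prod)
  moreover have "(\<Prod>d\<in>{d. d dvd m \<and> 1 < d \<and> d < m}. poly (cyclo d) 1) > 0"
    by (rule prod_pos) (use less.IH in auto)
  moreover have "int m > 0" using less.prems by simp
  ultimately show ?case by (metis zero_less_mult_pos2)
qed

text \<open>For every prime divisor q of d, \<Phi>_d(1) divides q: with d = m q, \<Phi>_d divides
  (q^d - 1)/(q^m - 1) = 1 + q^m + ... + q^(m(q-1)), whose value at 1 is q.\<close>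
lemma cyclo_at_one_dvd_prime:
  assumes q: "prime (q::nat)" and "q dvd d" and "d \<ge> 1"
  shows "poly (cyclo d) 1 dvd int q"
proof -
  obtain m where d: "d = m * q" using \<open>q dvd d\<close> by (metis dvd_def mult.commute)
  have m: "m \<ge> 1" using \<open>d \<ge> 1\<close> d by (cases m) auto
  have "m < d" using m d prime_gt_1_nat[OF q] by simp
  define S where "S = (\<Sum>i<q. monom (1::int) (m * i))"
  have "cyclo d * Xm1 m dvd Xm1 d"
    using m \<open>m < d\<close> d by (intro cyclo_mult_Xm1_dvd Xm1_cyclo_prod) auto
  also have "Xm1 d = S * Xm1 m" using Xm1_mult[of m q] d by (simp add: S_def mult.commute)
  finally have "cyclo d dvd S" using Xm1_nonzero[OF m(1), where 'a = int] by simp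
  then have "poly (cyclo d) 1 dvd poly S 1" by (metis dvd_def poly_mult)
  then show ?thesis by (simp add: S_def poly_sum poly_monom)
qed

text \<open>\<Phi>_d(1) as a natural number (it is positive for d \<ge> 2).\<close>
definition cyclo_one :: "nat \<Rightarrow> nat" where
  "cyclo_one d = nat (poly (cyclo d) 1)"

lemma of_nat_cyclo_one: "d \<ge> 2 \<Longrightarrow> int (cyclo_one d) = poly (cyclo d) 1"
  using cyclo_at_one_pos[of d] by (simp add: cyclo_one_def)

lemma multiplicity_cyclo_one:
  assumes p: "prime p" and "d \<ge> 2" and "\<nexists>a. d = p ^ a"
  shows "multiplicity p (cyclo_one d) = 0"
proof -
  obtain q where q: "prime q" "q dvd d" "q \<noteq> p"
    using Ex_other_prime_factor[of d p] assms by (auto simp: prime_factors_dvd)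
  have "int (cyclo_one d) dvd int q"
    using cyclo_at_one_dvd_prime[OF q(1,2)] assms of_nat_cyclo_one by simp
  then have "cyclo_one d dvd q" by simp
  then have "\<not> p dvd cyclo_one d"
    using p q primes_dvd_imp_eq[of p q] dvd_trans[of p "cyclo_one d" q] by blast
  then show ?thesis by (rule not_dvd_imp_multiplicity_0)
qed

section \<open>Cyclotomic factorization of the q-binomial coefficients\<close>

lemma qbinom_above: "k > n \<Longrightarrow> qbinom n k = 0"
  by (induction n k rule: qbinom.induct) auto

lemma qbinom_at_one: "poly (qbinom n k) 1 = int (n choose k)"
  by (induction n k rule: qbinom.induct) (auto simp: poly_monom)

text \<open>(q - 1)(q^2 - 1)...(q^m - 1), the q-factorial up to the factor (q - 1)^m.\<close>
definition qfact :: "nat \<Rightarrow> int poly" where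
  "qfact m = (\<Prod>i<m. Xm1 (Suc i))"

lemma qfact_0 [simp]: "qfact 0 = 1"
  by (simp add: qfact_def)

lemma qfact_Suc: "qfact (Suc m) = qfact m * Xm1 (Suc m)"
  by (simp add: qfact_def)

lemma qfact_nonzero: "qfact m \<noteq> 0"
  unfolding qfact_def using Xm1_nonzero[where 'a = int] by simp

text \<open>The q-analogue of n! = binom n k * k! * (n - k)!, by induction via the q-Pascal rule
  and q^(n+1) - 1 = q^(k+1) (q^(n-k) - 1) + (q^(k+1) - 1).\<close>
lemma qbinom_qfact: "k \<le> n \<Longrightarrow> qbinom n k * qfact k * qfact (n - k) = qfact n"
proof (induction n arbitrary: k)
  case 0
  then show ?case by simp
next
  case (Suc n)
  show ?case
  proof (cases k)
    case 0
    then show ?thesis by simp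
  next
    case (Suc j)
    show ?thesis
    proof (cases "j = n")
      case True
      have "qbinom n n * qfact n = 1 * qfact n" using Suc.IH[of n] by simp
      then have "qbinom n n = 1" using qfact_nonzero[of n] by (metis mult_right_cancel)
      then show ?thesis using Suc True qbinom_above[of n "Suc n"] by (simp add: qfact_Suc)
    next
      case False
      then have "j < n" using Suc.prems \<open>k = Suc j\<close> by simp
      have IH_j: "qbinom n j * qfact j * qfact (n - j) = qfact n"
        using Suc.IH \<open>j < n\<close> by simp
      have IH_Suc_j: "qbinom n (Suc j) * qfact (Suc j) * qfact (n - Suc j) = qfact n"
        using Suc.IH \<open>j < n\<close> by simp
      have n_j: "n - j = Suc (n - Suc j)" using \<open>j < n\<close> by simp
      have Xm1_Suc_n: "Xm1 (Suc n) = monom 1 (Suc j) * Xm1 (n - j) + Xm1 (Suc j)"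
        using Xm1_add[of "n - j" "Suc j"] \<open>j < n\<close> by simp
      have "qbinom (Suc n) k * qfact k * qfact (Suc n - k)
          = (qbinom n j * qfact j * qfact (n - j)) * Xm1 (Suc j)
            + monom 1 (Suc j) * (qbinom n (Suc j) * qfact (Suc j) * qfact (n - Suc j)) * Xm1 (n - j)"
        unfolding \<open>k = Suc j\<close> by (simp add: qfact_Suc n_j algebra_simps)
      also have "\<dots> = qfact n * Xm1 (Suc n)"
        unfolding IH_j IH_Suc_j Xm1_Suc_n by (simp add: algebra_simps)
      finally show ?thesis by (simp add: qfact_Suc)
    qed
  qed
qed

lemma qfact_cyclo: "m \<le> N \<Longrightarrow> qfact m = (\<Prod>d\<in>{1..N}. cyclo d ^ (m div d))"
proof (induction m)
  case 0
  then show ?case by simp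
next
  case (Suc m)
  have "{d \<in> {1..N}. d dvd Suc m} = {d. d dvd Suc m}"
    using Suc.prems by (auto intro: Suc_leI dvd_pos_nat dest: dvd_imp_le)
  then have "Xm1 (Suc m) = (\<Prod>d\<in>{1..N}. if d dvd Suc m then cyclo d else 1)"
    using Xm1_cyclo_prod[of "Suc m"] prod.inter_filter[of "{1..N}" cyclo "\<lambda>d. d dvd Suc m"]
    by simp
  then have "qfact (Suc m)
      = (\<Prod>d\<in>{1..N}. cyclo d ^ (m div d) * (if d dvd Suc m then cyclo d else 1))"
    using Suc by (simp add: qfact_Suc prod.distrib)
  also have "\<dots> = (\<Prod>d\<in>{1..N}. cyclo d ^ (Suc m div d))"
    by (rule prod.cong) (auto simp: div_Suc dvd_eq_mod_eq_0)
  finally show ?case .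
qed

text \<open>Counting multiples: n div d exceeds k div d + (n - k) div d by one exactly when
  adding k and n - k produces a carry modulo d, i.e. when n mod d < k mod d.\<close>
lemma div_carry:
  fixes k n d :: nat
  assumes "k \<le> n" and "d > 0"
  shows "n div d = k div d + (n - k) div d + (if n mod d < k mod d then 1 else 0)"
proof -
  define b where "b = n - k"
  have n: "n = k + b" using assms b_def by simp
  have "n div d = k div d + b div d + (k mod d + b mod d) div d"
    unfolding n by (rule div_add1_eq)
  moreover have "n mod d = (k mod d + b mod d) mod d"
    unfolding n by (simp add: mod_add_eq)
  moreover have "k mod d < d" "b mod d < d" using \<open>d > 0\<close> by auto
  ultimately show ?thesis
    unfolding b_def[symmetric]
    by (cases "k mod d + b mod d < d") (auto simp: le_div_geq le_mod_geq)
qed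

text \<open>The indices d whose cyclotomic polynomial divides [n,k]_q.\<close>
definition carry_divs :: "nat \<Rightarrow> nat \<Rightarrow> nat set" where
  "carry_divs n k = {d \<in> {1..n}. n mod d < k mod d}"

lemma carry_divs_subset: "carry_divs n k \<subseteq> {2..n}"
proof
  fix d assume "d \<in> carry_divs n k"
  then have "1 \<le> d" "d \<le> n" "n mod d < k mod d" unfolding carry_divs_def by auto
  moreover from this have "d \<noteq> 1" by auto
  ultimately show "d \<in> {2..n}" by auto
qed

lemma finite_carry_divs: "finite (carry_divs n k)"
  using carry_divs_subset finite_subset by blast

text \<open>[n,k]_q = \<Prod>_{d \<in> carry_divs n k} \<Phi>_d, by cancelling the common factors of the
  q-factorial identity.\<close>
theorem qbinom_cyclo: "k \<le> n \<Longrightarrow> qbinom n k = (\<Prod>d\<in>carry_divs n k. cyclo d)"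
proof -
  assume "k \<le> n"
  define P where "P = (\<Prod>d\<in>{1..n}. cyclo d ^ (k div d + (n - k) div d))"
  have "qbinom n k * P = qfact n"
    using qbinom_qfact[OF \<open>k \<le> n\<close>] qfact_cyclo[of k n] qfact_cyclo[of "n - k" n] \<open>k \<le> n\<close>
    by (simp add: P_def prod.distrib power_add mult.assoc)
  also have "qfact n = (\<Prod>d\<in>{1..n}. (if n mod d < k mod d then cyclo d else 1)
                                       * cyclo d ^ (k div d + (n - k) div d))"
    unfolding qfact_cyclo[OF order_refl]
    by (rule prod.cong) (use div_carry[OF \<open>k \<le> n\<close>] in \<open>auto simp: power_add\<close>)
  also have "\<dots> = (\<Prod>d\<in>carry_divs n k. cyclo d) * P"
  proof -
    have "(\<Prod>d\<in>carry_divs n k. cyclo d) = (\<Prod>d\<in>{1..n}. if n mod d < k mod d then cyclo d else 1)"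
      unfolding carry_divs_def by (rule prod.inter_filter) simp
    then show ?thesis unfolding prod.distrib P_def by simp
  qed
  finally have "qbinom n k * P = (\<Prod>d\<in>carry_divs n k. cyclo d) * P" .
  moreover have "P \<noteq> 0" unfolding P_def using cyclo_nonzero by auto
  ultimately show ?thesis by simp
qed

section \<open>The lcm of the q-binomial coefficients\<close>

text \<open>The indices d whose cyclotomic polynomial divides some [n,k]_q, 0 \<le> k \<le> n.\<close>
definition lcm_divs :: "nat \<Rightarrow> nat set" where
  "lcm_divs n = (\<Union>k\<in>{0..n}. carry_divs n k)"

lemma lcm_divs_subset: "lcm_divs n \<subseteq> {2..n}"
  unfolding lcm_divs_def using carry_divs_subset by blast

lemma finite_lcm_divs: "finite (lcm_divs n)"
  using lcm_divs_subset finite_subset by blast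

text \<open>Since the \<Phi>_d are monic and pairwise coprime, L_n(q) = \<Prod>_{d \<in> lcm_divs n} \<Phi>_d.\<close>
theorem Lq_cyclo: "Lq n = (\<Prod>d\<in>lcm_divs n. cyclo d)"
  unfolding Lq_def
proof (rule Lcm_eqI)
  have "lead_coeff (\<Prod>d\<in>lcm_divs n. cyclo d) = 1"
    unfolding lead_coeff_prod
    by (rule prod.neutral) (use lcm_divs_subset cyclo_monic in fastforce)
  then show "normalize (\<Prod>d\<in>lcm_divs n. cyclo d) = (\<Prod>d\<in>lcm_divs n. cyclo d)"
    by (intro poly_eqI) simp
next
  fix b assume "b \<in> qbinom n ` {0..n}"
  then obtain k where "k \<le> n" "b = qbinom n k" by auto
  then show "b dvd (\<Prod>d\<in>lcm_divs n. cyclo d)"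
    using qbinom_cyclo finite_lcm_divs
    by (simp add: lcm_divs_def prod_dvd_prod_subset UN_upper)
next
  fix c assume c: "\<And>b. b \<in> qbinom n ` {0..n} \<Longrightarrow> b dvd c"
  show "(\<Prod>d\<in>lcm_divs n. cyclo d) dvd c"
  proof (rule prod_pairwise_coprime_dvd[OF finite_lcm_divs])
    fix i assume "i \<in> lcm_divs n"
    then obtain k where k: "k \<le> n" "i \<in> carry_divs n k" unfolding lcm_divs_def by auto
    then have "cyclo i dvd qbinom n k"
      unfolding qbinom_cyclo[OF k(1)] using finite_carry_divs by (intro dvd_prodI)
    also have "qbinom n k dvd c" using c k by auto
    finally show "cyclo i dvd c" .
  next
    fix i j assume "i \<in> lcm_divs n" "j \<in> lcm_divs n" "i \<noteq> j"
    moreover from this have "i \<ge> 1" "j \<ge> 1" using lcm_divs_subset[of n] by auto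
    ultimately show "coprime (cyclo i) (cyclo j)" by (intro cyclo_coprime)
  qed
qed

lemma cyclo_one_pos: "d \<ge> 2 \<Longrightarrow> cyclo_one d > 0"
  using cyclo_at_one_pos[of d] by (simp add: cyclo_one_def)

lemma binom_cyclo_one: "k \<le> n \<Longrightarrow> n choose k = (\<Prod>d\<in>carry_divs n k. cyclo_one d)"
proof -
  assume "k \<le> n"
  have "int (n choose k) = (\<Prod>d\<in>carry_divs n k. poly (cyclo d) 1)"
    using qbinom_at_one[of n k] qbinom_cyclo[OF \<open>k \<le> n\<close>] by (simp add: poly_prod)
  also have "\<dots> = (\<Prod>d\<in>carry_divs n k. int (cyclo_one d))"
    using carry_divs_subset[of n k] by (intro prod.cong) (auto simp: of_nat_cyclo_one)
  finally show ?thesis by (metis of_nat_eq_iff of_nat_prod)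
qed

lemma Lq_at_one: "poly (Lq n) 1 = int (\<Prod>d\<in>lcm_divs n. cyclo_one d)"
proof -
  have "poly (Lq n) 1 = (\<Prod>d\<in>lcm_divs n. poly (cyclo d) 1)"
    unfolding Lq_cyclo by (simp add: poly_prod)
  also have "\<dots> = (\<Prod>d\<in>lcm_divs n. int (cyclo_one d))"
    using lcm_divs_subset[of n] by (intro prod.cong) (auto simp: of_nat_cyclo_one)
  finally show ?thesis by simp
qed

lemma multiplicity_prod_cyclo_one:
  assumes p: "prime p" and "finite A" and "\<And>d. d \<in> A \<Longrightarrow> d \<ge> 2"
  shows "multiplicity p (\<Prod>d\<in>A. cyclo_one d)
           = (\<Sum>d\<in>{d \<in> A. \<exists>a. d = p ^ a}. multiplicity p (cyclo_one d))"
proof -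
  have "0 \<notin> cyclo_one ` A" using assms(3) cyclo_one_pos by fastforce
  then have "multiplicity p (\<Prod>d\<in>A. cyclo_one d) = (\<Sum>d\<in>A. multiplicity p (cyclo_one d))"
    using p \<open>finite A\<close> by (simp add: prime_elem_multiplicity_prod_distrib)
  also have "\<dots> = (\<Sum>d\<in>{d \<in> A. \<exists>a. d = p ^ a}. multiplicity p (cyclo_one d))"
    using \<open>finite A\<close> assms(3) multiplicity_cyclo_one[OF p]
    by (intro sum.mono_neutral_right) auto
  finally show ?thesis .
qed

lemma pred_mod_divisor:
  fixes d D :: nat
  assumes "d dvd D" and "D \<ge> 1"
  shows "(D - 1) mod d = d - 1"
proof -
  obtain t where t: "D = d * t" using \<open>d dvd D\<close> by blast
  with \<open>D \<ge> 1\<close> have "d \<ge> 1" "t \<ge> 1" by (cases d; cases t; auto)+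
  then have "D - 1 = (d - 1) + d * (t - 1)" using t by (simp add: algebra_simps)
  then have "(D - 1) mod d = ((d - 1) + d * (t - 1)) mod d" by (simp only:)
  also have "\<dots> = (d - 1) mod d" by (rule mod_mult_self2)
  also have "\<dots> = d - 1" using \<open>d \<ge> 1\<close> by simp
  finally show ?thesis .
qed

text \<open>All powers of p in lcm_divs n lie in the single carry set of k = p^b - 1, where
  p^b is the largest of them: for p^a \<le> p^b we have k mod p^a = p^a - 1, the maximal
  residue, so any residue n mod p^a smaller than some k' mod p^a is also smaller.\<close>
lemma prime_powers_in_carry_divs:
  assumes p: "prime p"
  shows "\<exists>k\<le>n. {d \<in> lcm_divs n. \<exists>a. d = p ^ a} \<subseteq> carry_divs n k"
proof (cases "{d \<in> lcm_divs n. \<exists>a. d = p ^ a} = {}")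
  case True
  then show ?thesis by auto
next
  case False
  define A where "A = {d \<in> lcm_divs n. \<exists>a. d = p ^ a}"
  have "finite A" unfolding A_def using finite_lcm_divs by simp
  define D where "D = Max A"
  have "D \<in> A" unfolding D_def using \<open>finite A\<close> False by (intro Max_in) (auto simp: A_def)
  then obtain b where b: "D = p ^ b" and "D \<in> lcm_divs n" unfolding A_def by auto
  then have D: "2 \<le> D" "D \<le> n" using lcm_divs_subset[of n] by auto
  have "A \<subseteq> carry_divs n (D - 1)"
  proof
    fix d assume "d \<in> A"
    then obtain a where a: "d = p ^ a" and "d \<in> lcm_divs n" unfolding A_def by auto
    then have d: "2 \<le> d" "d \<le> n" using lcm_divs_subset[of n] by auto
    have "d \<le> D" using \<open>d \<in> A\<close> \<open>finite A\<close> by (simp add: D_def)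
    then have "a \<le> b" using a b prime_gt_1_nat[OF p] by simp
    then have "d dvd D" using a b by (simp add: le_imp_power_dvd)
    then have "(D - 1) mod d = d - 1" using D by (intro pred_mod_divisor) auto
    obtain k' where "d \<in> carry_divs n k'" using \<open>d \<in> lcm_divs n\<close> unfolding lcm_divs_def by auto
    then have "n mod d < k' mod d" unfolding carry_divs_def by simp
    moreover have "k' mod d < d" using d by simp
    ultimately have "n mod d < (D - 1) mod d" using \<open>(D - 1) mod d = d - 1\<close> by simp
    then show "d \<in> carry_divs n (D - 1)" using d unfolding carry_divs_def by simp
  qed
  then show ?thesis using D unfolding A_def by (intro exI[of _ "D - 1"]) auto
qed

lemma multiplicity_prod_lcm_divs:
  assumes p: "prime p"
  shows "\<exists>k\<le>n. multiplicity p (\<Prod>d\<in>lcm_divs n. cyclo_one d) \<le> multiplicity p (n choose k)"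
proof -
  obtain k where k: "k \<le> n" "{d \<in> lcm_divs n. \<exists>a. d = p ^ a} \<subseteq> carry_divs n k"
    using prime_powers_in_carry_divs[OF p] by blast
  have "multiplicity p (\<Prod>d\<in>lcm_divs n. cyclo_one d)
        = (\<Sum>d\<in>{d \<in> lcm_divs n. \<exists>a. d = p ^ a}. multiplicity p (cyclo_one d))"
    using p finite_lcm_divs lcm_divs_subset[of n] by (intro multiplicity_prod_cyclo_one) auto
  also have "\<dots> \<le> (\<Sum>d\<in>{d \<in> carry_divs n k. \<exists>a. d = p ^ a}. multiplicity p (cyclo_one d))"
    using k(2) finite_carry_divs by (intro sum_mono2) auto
  also have "\<dots> = multiplicity p (n choose k)"
    unfolding binom_cyclo_one[OF k(1)] using p finite_carry_divs carry_divs_subset[of n k]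
    by (intro multiplicity_prod_cyclo_one[symmetric]) auto
  finally show ?thesis using k(1) by blast
qed

text \<open>lcm(binom n 0, ..., binom n n) = \<Prod>_{d \<in> lcm_divs n} \<Phi>_d(1): the product is a
  common multiple, and no prime divides it to a higher power than the lcm.\<close>
theorem Lcm_binomial_cyclo_one:
  "Lcm ((\<lambda>k. n choose k) ` {0..n}) = (\<Prod>d\<in>lcm_divs n. cyclo_one d)"
proof (rule dvd_antisym)
  show "Lcm ((\<lambda>k. n choose k) ` {0..n}) dvd (\<Prod>d\<in>lcm_divs n. cyclo_one d)"
  proof (rule Lcm_least)
    fix b assume "b \<in> (\<lambda>k. n choose k) ` {0..n}"
    then obtain k where "k \<le> n" "b = n choose k" by auto
    then show "b dvd (\<Prod>d\<in>lcm_divs n. cyclo_one d)"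
      using binom_cyclo_one finite_lcm_divs
      by (simp add: lcm_divs_def prod_dvd_prod_subset UN_upper)
  qed
next
  define M where "M = Lcm ((\<lambda>k. n choose k) ` {0..n})"
  have "M \<noteq> 0" unfolding M_def by (subst Lcm_0_iff) auto
  have "(\<Prod>d\<in>lcm_divs n. cyclo_one d) \<noteq> 0"
    using finite_lcm_divs lcm_divs_subset[of n] cyclo_one_pos by fastforce
  moreover have "multiplicity p (\<Prod>d\<in>lcm_divs n. cyclo_one d) \<le> multiplicity p M"
    if "prime p" for p
  proof -
    obtain k where "k \<le> n"
      and "multiplicity p (\<Prod>d\<in>lcm_divs n. cyclo_one d) \<le> multiplicity p (n choose k)"
      using multiplicity_prod_lcm_divs[OF \<open>prime p\<close>] by blast
    moreover have "multiplicity p (n choose k) \<le> multiplicity p M"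
      using \<open>k \<le> n\<close> \<open>M \<noteq> 0\<close> by (intro dvd_imp_multiplicity_le) (auto simp: M_def)
    ultimately show ?thesis by linarith
  qed
  ultimately show "(\<Prod>d\<in>lcm_divs n. cyclo_one d) dvd M"
    by (rule multiplicity_le_imp_dvd)
qed

lemma poly_map_poly_of_int:
  "poly (map_poly (of_int :: int \<Rightarrow> 'a::comm_ring_1) p) (of_int x) = of_int (poly p x)"
  by (induction p) (simp_all add: map_poly_pCons)

theorem mainTheorem5:
  fixes n :: nat
  assumes "n \<ge> 1"
  shows "poly (Lq n) 1 = int (Lcm ((\<lambda>k. n choose k) ` {0..n}))
         \<and> ((\<lambda>q::real. poly (map_poly of_int (Lq n)) q)
              \<longlongrightarrow> real (Lcm ((\<lambda>k. n choose k) ` {0..n}))) (at 1)"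
proof
  show value_at_one: "poly (Lq n) 1 = int (Lcm ((\<lambda>k. n choose k) ` {0..n}))"
    by (simp add: Lq_at_one Lcm_binomial_cyclo_one)
  have "((\<lambda>q::real. poly (map_poly of_int (Lq n)) q) \<longlongrightarrow> poly (map_poly of_int (Lq n)) 1) (at 1)"
    by (intro tendsto_intros)
  moreover have "poly (map_poly (of_int :: int \<Rightarrow> real) (Lq n)) 1 = real (Lcm ((\<lambda>k. n choose k) ` {0..n}))"
    using value_at_one poly_map_poly_of_int[of "Lq n" 1] by simp
  ultimately show "((\<lambda>q::real. poly (map_poly of_int (Lq n)) q)
              \<longlongrightarrow> real (Lcm ((\<lambda>k. n choose k) ` {0..n}))) (at 1)"
    by simp
qed

end
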